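(* There exists a family of $T$-round DRACC instances whose corresponding Dd-MDPs do not admit a deterministic chasing oracle with chasing regret $o(T)$.
   Context: DRACC problem: $N$ resources, $T$ users arriving in rounds $t=1,\dots,T$. Resource $i$ is active in rounds $t_a(i)\le t\le t_e(i)$ with capacity $c(i)\in\mathbb{Z}_{>0}$ on arrival; $A_t$ is the set of active resources; $C\ge\max_ic(i)$, $W\ge\max_t|A_t|$. User $t$ has valuation $v_t:2^{A_t}\to[0,1)$, $v_t(\emptyset)=0$. Posting $\bm p\in(0,1]^{A_t}$ to user $t$ sells one unit of each resource in $\hat A^{\bm p}_t=\arg\max_{A\subseteq A_t}\{v_t(A)-\sum_{i\in A}\bm p(i)\}$ (lexicographic ties) at payment $\hat q^{\bm p}_t=\sum_{i\in\hat A^{\bm p}_t}\bm p(i)$; $v_t$ is revealed after posting. Inventory vectors $\bm\lambda_t\in\{0,\dots,C\}^{A_t}$: $\bm\lambda_t(i)=c(i)$ if $t_a(i)=t$; $\bm\lambda_{t+1}(i)=\bm\lambda_t(i)-\mathbb{1}[i\in\hat A^{\bm p_t}_t]$ for $i\in A_t\cap A_{t+1}$. $\bm p$ is feasible for $\bm\lambda$ if $\bm p(i)=1$ whenever $\bm\lambda(i)=0$. A pricing policy maps inventory vectors to feasible price vectors. Instance data are chosen by an adaptive adversary. Corresponding Dd-MDP: states are inventory vectors, feasible actions are feasible price vectors, reward $f_t(s,x)=\hat q^x_t$, transition $g_t(s,x)=s'$ with $s'(i)=s(i)-\mathbb{1}[i\in\hat A^x_t]$ for $i\in A_{t+1}\cap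 A_t$, $s'(i)=c(i)$ for $i\in A_{t+1}\setminus A_t$. Policy simulation: $s^\gamma_1=s_1$, $x^\gamma_t=\gamma(s^\gamma_t)$, $s^\gamma_{t+1}=g_t(s^\gamma_t,x^\gamma_t)$. Chasing oracle: given a target policy $\gamma$, it is invoked at some round $t_{\mathrm{init}}$ with an arbitrary initial state $s_{\mathrm{init}}$ and outputs, in each round $t\ge t_{\mathrm{init}}$ up to a halting round $t_{\mathrm{final}}$, an action $\hat x(t)$ feasible for $\hat s(t)$, where $\hat s(t_{\mathrm{init}})=s_{\mathrm{init}}$ and $\hat s(t)=g_{t-1}(\hat s(t-1),\hat x(t-1))$; after each round it observes $g_t,f_t$. Its chasing regret is $\sum_{t=t_{\mathrm{init}}}^{t_{\mathrm{final}}}f_t(s^\gamma_t,x^\gamma_t)-\sum_{t=t_{\mathrm{init}}}^{t_{\mathrm{final}}}\mathbb{E}[f_t(\hat s(t),\hat x(t))]$. It is deterministic if its outputs are deterministic functions of its inputs and observations. *)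

theory Defs
  imports Complex_Main "HOL-Library.List_Lexorder"
begin

text \<open>Resources are 0,...,nres-1; rounds are 1,...,T.\<close>
record inst =
  nres :: nat
  ta   :: "nat \<Rightarrow> nat"
  te   :: "nat \<Rightarrow> nat"
  cap  :: "nat \<Rightarrow> nat"
  val  :: "nat \<Rightarrow> nat set \<Rightarrow> real"

definition act :: "inst \<Rightarrow> nat \<Rightarrow> nat set" where
  "act I t = {i. i < nres I \<and> ta I i \<le> t \<and> t \<le> te I i}"

definition valid_inst :: "nat \<Rightarrow> nat \<Rightarrow> nat \<Rightarrow> inst \<Rightarrow> bool" where
  "valid_inst C W T I \<longleftrightarrow>
     (\<forall>i < nres I. 1 \<le> ta I i \<and> ta I i \<le> te I i \<and> te I i \<le> T \<and> 0 < cap I i \<and> cap I i \<le> C)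
   \<and> (\<forall>t \<in> {1..T}. card (act I t) \<le> W)
   \<and> (\<forall>t \<in> {1..T}. val I t {} = 0 \<and> (\<forall>A \<subseteq> act I t. 0 \<le> val I t A \<and> val I t A < 1))"

type_synonym state = "nat \<Rightarrow> nat option"   (* inventory vector with domain A_t *)
type_synonym price = "nat \<Rightarrow> real"

definition utility :: "inst \<Rightarrow> nat \<Rightarrow> price \<Rightarrow> nat set \<Rightarrow> real" where
  "utility I t p A = val I t A - (\<Sum>i\<in>A. p i)"

definition maxsets :: "inst \<Rightarrow> nat \<Rightarrow> price \<Rightarrow> nat set set" where
  "maxsets I t p = {A. A \<subseteq> act I t \<and> (\<forall>B. B \<subseteq> act I t \<longrightarrow> utility I t p B \<le> utility I t p A)}"

text \<open>Demanded bundle: utility maximiser, ties broken lexicographically.\<close>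
definition sold :: "inst \<Rightarrow> nat \<Rightarrow> price \<Rightarrow> nat set" where
  "sold I t p = (ARG_MIN sorted_list_of_set A. A \<in> maxsets I t p)"

definition payment :: "inst \<Rightarrow> nat \<Rightarrow> price \<Rightarrow> real" where
  "payment I t p = (\<Sum>i\<in>sold I t p. p i)"

definition feasible :: "state \<Rightarrow> price \<Rightarrow> bool" where
  "feasible s p \<longleftrightarrow> (\<forall>i\<in>dom s. 0 < p i \<and> p i \<le> 1 \<and> (s i = Some 0 \<longrightarrow> p i = 1))"

definition target_policy :: "(state \<Rightarrow> price) \<Rightarrow> bool" where
  "target_policy \<gamma> \<longleftrightarrow> (\<forall>s. feasible s (\<gamma> s))"

definition valid_state :: "nat \<Rightarrow> inst \<Rightarrow> nat \<Rightarrow> state \<Rightarrow> bool" where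
  "valid_state C I t s \<longleftrightarrow> dom s = act I t \<and> (\<forall>i n. s i = Some n \<longrightarrow> n \<le> C)"

definition rew :: "inst \<Rightarrow> nat \<Rightarrow> state \<Rightarrow> price \<Rightarrow> real" where
  "rew I t s x = payment I t x"

definition trans :: "inst \<Rightarrow> nat \<Rightarrow> state \<Rightarrow> price \<Rightarrow> state" where
  "trans I t s x = (\<lambda>i. if i \<in> act I (Suc t) then
       (if i \<in> act I t then map_option (\<lambda>n. n - (if i \<in> sold I t x then 1 else 0)) (s i)
        else Some (cap I i))
     else None)"

definition init_state :: "inst \<Rightarrow> state" where
  "init_state I = (\<lambda>i. if i \<in> act I 1 then Some (cap I i) else None)"

text \<open>Policy simulation: pstate I g k is the state s^g_{k+1}.\<close>
primrec pstate :: "inst \<Rightarrow> (state \<Rightarrow> price) \<Rightarrow> nat \<Rightarrow> state" where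
  "pstate I \<gamma> 0 = init_state I"
| "pstate I \<gamma> (Suc k) = trans I (Suc k) (pstate I \<gamma> k) (\<gamma> (pstate I \<gamma> k))"

definition gstate :: "inst \<Rightarrow> (state \<Rightarrow> price) \<Rightarrow> nat \<Rightarrow> state" where
  "gstate I \<gamma> t = pstate I \<gamma> (t - 1)"

type_synonym obs = "(state \<Rightarrow> price \<Rightarrow> state) \<times> (state \<Rightarrow> price \<Rightarrow> real)"

text \<open>A deterministic chasing oracle: its output in round t is a function of the horizon T,
  the target policy, t_init, s_init and the observations (g_s, f_s) of rounds t_init..t-1.\<close>
type_synonym chaser = "nat \<Rightarrow> (state \<Rightarrow> price) \<Rightarrow> nat \<Rightarrow> state \<Rightarrow> obs list \<Rightarrow> price"

definition hist :: "inst \<Rightarrow> nat \<Rightarrow> nat \<Rightarrow> obs list" where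
  "hist I t0 k = map (\<lambda>j. (trans I (t0 + j), rew I (t0 + j))) [0..<k]"

text \<open>ostate ... k is the oracle's state hat-s(t0+k).\<close>
primrec ostate :: "chaser \<Rightarrow> inst \<Rightarrow> nat \<Rightarrow> (state \<Rightarrow> price) \<Rightarrow> nat \<Rightarrow> state \<Rightarrow> nat \<Rightarrow> state" where
  "ostate Q I T \<gamma> t0 s0 0 = s0"
| "ostate Q I T \<gamma> t0 s0 (Suc k) =
     trans I (t0 + k) (ostate Q I T \<gamma> t0 s0 k) (Q T \<gamma> t0 s0 (hist I t0 k))"

definition oact :: "chaser \<Rightarrow> inst \<Rightarrow> nat \<Rightarrow> (state \<Rightarrow> price) \<Rightarrow> nat \<Rightarrow> state \<Rightarrow> nat \<Rightarrow> price" where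
  "oact Q I T \<gamma> t0 s0 k = Q T \<gamma> t0 s0 (hist I t0 k)"

definition chasing_regret ::
  "chaser \<Rightarrow> inst \<Rightarrow> nat \<Rightarrow> (state \<Rightarrow> price) \<Rightarrow> nat \<Rightarrow> nat \<Rightarrow> state \<Rightarrow> real" where
  "chasing_regret Q I T \<gamma> t0 tf s0 =
     (\<Sum>t = t0..tf. rew I t (gstate I \<gamma> t) (\<gamma> (gstate I \<gamma> t)))
   - (\<Sum>t = t0..tf. rew I t (ostate Q I T \<gamma> t0 s0 (t - t0)) (oact Q I T \<gamma> t0 s0 (t - t0)))"

definition chaser_feasible :: "nat \<Rightarrow> (nat \<Rightarrow> inst set) \<Rightarrow> chaser \<Rightarrow> bool" where
  "chaser_feasible C F Q \<longleftrightarrow>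
     (\<forall>T. \<forall>I\<in>F T. \<forall>\<gamma> t0 s0 k. target_policy \<gamma> \<and> valid_state C I t0 s0 \<and> 1 \<le> t0 \<and> t0 + k \<le> T
        \<longrightarrow> feasible (ostate Q I T \<gamma> t0 s0 k) (oact Q I T \<gamma> t0 s0 k))"

end

theory Submission
  imports Defs
begin

text \<open>
  Resource 0 lives in all rounds \<open>1..T\<close>, resource \<open>t \<ge> 1\<close> only in round \<open>t\<close>, all with
  capacity 1. In one instance the round-1 user buys resource 0, in the other not, and the target
  policy prices resource \<open>t\<close> at 3/4 or at 1/4 according to whether resource 0 is sold out.
  A deterministic oracle started in round 2 from a fixed state receives the same observations in
  both instances, so it posts the same price \<open>q\<close> for resource \<open>t\<close> in both. Knowing \<open>q\<close>, the
  adversary gives the round-\<open>t\<close> user the value 7/8 if \<open>q \<le> 3/8\<close> and 5/16 otherwise; either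
  way the two chasing regrets together grow by at least 1/4, so one of them is at least
  \<open>(T - 1)/8\<close>.
\<close>

lemma maxsets_nonempty:
  assumes "finite (act I t)"
  shows "maxsets I t p \<noteq> {}"
proof -
  let ?U = "utility I t p ` Pow (act I t)"
  have "Max ?U \<in> ?U"
    using assms by (intro Max_in) auto
  then obtain A where "A \<subseteq> act I t" "utility I t p A = Max ?U"
    by auto
  then have "A \<in> maxsets I t p"
    using assms Max_ge by (fastforce simp: maxsets_def)
  then show ?thesis by blast
qed

lemma sold_in_maxsets:
  assumes "finite (act I t)"
  shows "sold I t p \<in> maxsets I t p"
proof -
  have "maxsets I t p \<subseteq> Pow (act I t)"
    by (auto simp: maxsets_def)
  then have "finite (maxsets I t p)"
    using assms by (simp add: finite_subset)
  from arg_min_if_finite(1)[OF this maxsets_nonempty[OF assms]]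
  show ?thesis
    unfolding sold_def arg_min_on_def .
qed

definition single_minded :: "nat \<Rightarrow> real \<Rightarrow> nat set \<Rightarrow> real" where
  "single_minded j w = (\<lambda>A. if j \<in> A then w else 0)"

lemma maxsets_single_minded_subset:
  assumes fin: "finite (act I t)" and val: "val I t = single_minded j w"
    and pos: "\<forall>i \<in> act I t - {j}. 0 < p i" and S: "S \<in> maxsets I t p"
  shows "S \<subseteq> {j}"
proof
  fix i assume "i \<in> S"
  show "i \<in> {j}"
  proof (rule ccontr)
    assume "i \<notin> {j}"
    have "finite S" "S \<subseteq> act I t"
      using S fin by (auto simp: maxsets_def intro: finite_subset)
    then have "utility I t p (S - {i}) = utility I t p S + p i"
      using \<open>i \<in> S\<close> \<open>i \<notin> {j}\<close> by (simp add: utility_def val single_minded_def sum_diff1)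
    moreover have "utility I t p (S - {i}) \<le> utility I t p S"
      using S unfolding maxsets_def by blast
    moreover have "0 < p i"
      using pos \<open>i \<in> S\<close> \<open>i \<notin> {j}\<close> \<open>S \<subseteq> act I t\<close> by blast
    ultimately show False
      by linarith
  qed
qed

lemma sold_single_minded:
  assumes fin: "finite (act I t)" and j: "j \<in> act I t" and val: "val I t = single_minded j w"
    and pos: "\<forall>i \<in> act I t - {j}. 0 < p i" and no_tie: "p j \<noteq> w"
  shows "sold I t p = (if p j < w then {j} else {})"
proof -
  let ?S = "sold I t p"
  have S: "?S \<in> maxsets I t p"
    using fin by (rule sold_in_maxsets)
  have u: "utility I t p {} = 0" "utility I t p {j} = w - p j"
    by (simp_all add: utility_def val single_minded_def)
  have "utility I t p {} \<le> utility I t p ?S" "utility I t p {j} \<le> utility I t p ?S"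
    using S j by (auto simp: maxsets_def)
  moreover have "?S = {} \<or> ?S = {j}"
    using maxsets_single_minded_subset[OF fin val pos S] by blast
  ultimately show ?thesis
    using u no_tie by auto
qed

lemma payment_single_minded_le:
  assumes fin: "finite (act I t)" and j: "j \<in> act I t" and val: "val I t = single_minded j w"
  shows "payment I t p \<le> (if p j \<le> w then max (p j) 0 else 0)"
proof -
  let ?S = "sold I t p"
  have S: "?S \<in> maxsets I t p"
    using fin by (rule sold_in_maxsets)
  then have sub: "?S \<subseteq> act I t" and opt: "\<And>B. B \<subseteq> act I t \<Longrightarrow> utility I t p B \<le> utility I t p ?S"
    by (auto simp: maxsets_def)
  have "finite ?S"
    using fin sub by (rule finite_subset[rotated])
  have u: "utility I t p ?S = val I t ?S - payment I t p"
    by (simp add: utility_def payment_def)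
  show ?thesis
  proof (cases "j \<in> ?S")
    case True
    have "utility I t p (?S - {j}) = - (payment I t p - p j)"
      using True \<open>finite ?S\<close> by (simp add: utility_def payment_def val single_minded_def sum_diff1)
    then have "p j \<le> w"
      using opt[of "?S - {j}"] sub u True by (auto simp: val single_minded_def)
    moreover have "payment I t p \<le> p j"
      using opt[of "{j}"] j u True by (simp add: utility_def val single_minded_def)
    ultimately show ?thesis by simp
  next
    case False
    then have "payment I t p \<le> 0"
      using opt[of "{}"] u by (simp add: utility_def val single_minded_def)
    then show ?thesis by auto
  qed
qed

lemma sold_cong:
  "act I t = act I' t \<Longrightarrow> val I t = val I' t \<Longrightarrow> sold I t = sold I' t"
  by (simp add: fun_eq_iff sold_def maxsets_def utility_def)

lemma trans_cong:
  "act I = act I' \<Longrightarrow> cap I = cap I' \<Longrightarrow> val I t = val I' t \<Longrightarrow> trans I t = trans I' t"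
  using sold_cong[of I t I'] by (simp add: fun_eq_iff trans_def)

lemma rew_cong:
  "act I t = act I' t \<Longrightarrow> val I t = val I' t \<Longrightarrow> rew I t = rew I' t"
  using sold_cong[of I t I'] by (simp add: fun_eq_iff rew_def payment_def)

lemma hist_cong:
  assumes "act I = act I'" "cap I = cap I'" "\<forall>j<k. val I (t0 + j) = val I' (t0 + j)"
  shows "hist I t0 k = hist I' t0 k"
  using assms by (auto simp: hist_def intro!: trans_cong rew_cong)

lemma chasing_regret_eq:
  "chasing_regret Q I T \<gamma> t0 tf s0 =
     (\<Sum>t = t0..tf. payment I t (\<gamma> (gstate I \<gamma> t)))
   - (\<Sum>t = t0..tf. payment I t (Q T \<gamma> t0 s0 (hist I t0 (t - t0))))"
  by (simp add: chasing_regret_def rew_def oact_def)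

definition hard_inst :: "nat \<Rightarrow> (nat \<Rightarrow> real) \<Rightarrow> bool \<Rightarrow> inst" where
  "hard_inst T v b =
    \<lparr>nres = Suc T, ta = (\<lambda>i. if i = 0 then 1 else i), te = (\<lambda>i. if i = 0 then T else i),
     cap = (\<lambda>_. 1),
     val = (\<lambda>t. if t = 1 then single_minded 0 (if b then 9/10 else 0) else single_minded t (v t))\<rparr>"

lemma act_hard_inst: "1 \<le> t \<Longrightarrow> t \<le> T \<Longrightarrow> act (hard_inst T v b) t = {0, t}"
  by (auto simp: act_def hard_inst_def)

lemma act_hard_inst_indep: "act (hard_inst T v b) = act (hard_inst T v' b')"
  by (simp add: fun_eq_iff act_def hard_inst_def)

lemma cap_hard_inst [simp]: "cap (hard_inst T v b) = (\<lambda>_. 1)"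
  by (simp add: hard_inst_def)

lemma val_hard_inst [simp]:
  "val (hard_inst T v b) t =
     (if t = 1 then single_minded 0 (if b then 9/10 else 0) else single_minded t (v t))"
  by (simp add: hard_inst_def)

lemma valid_hard_inst:
  assumes "1 \<le> T" and "\<forall>t. 0 \<le> v t \<and> v t < 1"
  shows "valid_inst 1 2 T (hard_inst T v b)"
proof -
  have "card (act (hard_inst T v b) t) \<le> 2" if "t \<in> {1..T}" for t
    using that by (simp add: act_hard_inst card_insert_le_m1)
  then show ?thesis
    using assms by (auto simp: valid_inst_def hard_inst_def single_minded_def)
qed

lemma sold_hard_inst_indep:
  "t \<noteq> 1 \<Longrightarrow> sold (hard_inst T v b) t = sold (hard_inst T v b') t"
  by (rule sold_cong) (simp_all add: act_hard_inst_indep[of T v b v b'])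

lemma hist_hard_inst_cong:
  assumes "\<forall>j<k. v (2 + j) = v' (2 + j)"
  shows "hist (hard_inst T v b) 2 k = hist (hard_inst T v' b') 2 k"
  using assms by (intro hist_cong act_hard_inst_indep) auto

definition hard_state :: "nat \<Rightarrow> nat \<Rightarrow> state" where
  "hard_state n t = (\<lambda>i. if i = 0 then Some n else if i = t then Some 1 else None)"

definition signal_policy :: "state \<Rightarrow> price" where
  "signal_policy s i =
     (if s i = Some 0 then 1 else if i = 0 then 1/2 else if s 0 = Some 0 then 3/4 else 1/4)"

lemma target_policy_signal_policy: "target_policy signal_policy"
  by (simp add: target_policy_def feasible_def signal_policy_def)

lemma init_state_hard_inst: "1 \<le> T \<Longrightarrow> init_state (hard_inst T v b) = hard_state 1 1"
  by (auto simp: fun_eq_iff init_state_def hard_state_def act_hard_inst)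

lemma trans_hard_state:
  assumes "1 \<le> t" "t < T"
  shows "trans (hard_inst T v b) t (hard_state n t) p =
           hard_state (if 0 \<in> sold (hard_inst T v b) t p then n - 1 else n) (Suc t)"
  using assms by (auto simp: fun_eq_iff trans_def hard_state_def act_hard_inst)

lemma sold_signal_policy:
  assumes "1 \<le> t" "t \<le> T"
  shows "0 \<in> sold (hard_inst T v b) t (signal_policy (hard_state n t)) \<longleftrightarrow> t = 1 \<and> b \<and> 0 < n"
proof -
  let ?I = "hard_inst T v b" and ?p = "signal_policy (hard_state n t)"
  have act: "act ?I t = {0, t}"
    using assms by (rule act_hard_inst)
  have pos: "\<forall>i \<in> act ?I t - {j}. 0 < ?p i" for j
    by (simp add: signal_policy_def)
  show ?thesis
  proof (cases "t = 1")
    case True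
    have "sold ?I t ?p = (if ?p 0 < (if b then 9/10 else 0) then {0} else {})"
      using True act pos by (intro sold_single_minded) (auto simp: signal_policy_def hard_state_def)
    then show ?thesis
      using True by (simp add: signal_policy_def hard_state_def)
  next
    case False
    then have "sold ?I t ?p \<subseteq> {t}"
      using act pos assms
      by (intro maxsets_single_minded_subset[OF _ _ _ sold_in_maxsets]) auto
    then show ?thesis
      using False assms by auto
  qed
qed

lemma pstate_hard_inst:
  "k < T \<Longrightarrow> pstate (hard_inst T v b) signal_policy k = hard_state (if b \<and> 0 < k then 0 else 1) (Suc k)"
proof (induction k)
  case 0
  then show ?case by (simp add: init_state_hard_inst)
next
  case (Suc k)
  then show ?case
    by (simp add: trans_hard_state sold_signal_policy)
qed

lemma gstate_hard_inst:
  "2 \<le> t \<Longrightarrow> t \<le> T \<Longrightarrow> gstate (hard_inst T v b) signal_policy t = hard_state (if b then 0 else 1) t"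
  using pstate_hard_inst[of "t - 1" T v b] by (simp add: gstate_def)

definition chase_price :: "chaser \<Rightarrow> nat \<Rightarrow> (nat \<Rightarrow> real) \<Rightarrow> nat \<Rightarrow> price" where
  "chase_price Q T v t = Q T signal_policy 2 (hard_state 1 2) (hist (hard_inst T v True) 2 (t - 2))"

definition adv_value :: "real \<Rightarrow> real" where
  "adv_value q = (if q \<le> 3/8 then 7/8 else 5/16)"

text \<open>The adaptive adversary fixes the value of round \<open>k + 2\<close> after seeing the oracle's price
  there, which depends only on the values of the earlier rounds.\<close>
primrec adv_vals :: "chaser \<Rightarrow> nat \<Rightarrow> nat \<Rightarrow> nat \<Rightarrow> real" where
  "adv_vals Q T 0 = (\<lambda>_. 0)"
| "adv_vals Q T (Suc k) =
     (adv_vals Q T k)(k + 2 := adv_value (chase_price Q T (adv_vals Q T k) (k + 2) (k + 2)))"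

lemma adv_vals_stable: "t < k + 2 \<Longrightarrow> k \<le> m \<Longrightarrow> adv_vals Q T m t = adv_vals Q T k t"
  by (induction m) (auto simp: le_Suc_eq)

lemma adv_vals_range: "0 \<le> adv_vals Q T m t \<and> adv_vals Q T m t < 1"
  by (induction m) (auto simp: adv_value_def)

lemma chase_price_cong:
  "\<forall>s. 2 \<le> s \<and> s < t \<longrightarrow> v s = v' s \<Longrightarrow> chase_price Q T v t = chase_price Q T v' t"
  unfolding chase_price_def by (subst hist_hard_inst_cong[of _ v v']) auto

lemma adv_vals_eq_adv_value:
  assumes "2 \<le> t" "t < m + 2"
  shows "adv_vals Q T m t = adv_value (chase_price Q T (adv_vals Q T m) t t)"
proof -
  obtain k where t: "t = k + 2"
    using assms(1) by (metis add.commute le_Suc_ex)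
  have "adv_vals Q T m t = adv_vals Q T (Suc k) t"
    using assms t by (intro adv_vals_stable) auto
  also have "\<dots> = adv_value (chase_price Q T (adv_vals Q T k) t t)"
    by (simp add: t)
  also have "chase_price Q T (adv_vals Q T k) t = chase_price Q T (adv_vals Q T m) t"
    using assms t by (intro chase_price_cong) (auto intro: adv_vals_stable[symmetric])
  finally show ?thesis .
qed

lemma payment_gap_adv_value:
  assumes fin: "finite (act I t)" and j: "j \<in> act I t"
    and val: "val I t = single_minded j (adv_value (q j))"
    and pos: "\<forall>i \<in> act I t - {j}. 0 < p_hi i \<and> 0 < p_lo i"
    and "p_hi j = 3/4" "p_lo j = 1/4"
  shows "1/4 \<le> payment I t p_hi + payment I t p_lo - 2 * payment I t q"
proof -
  have pay: "payment I t p = (if p j < adv_value (q j) then p j else 0)"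
    if "\<forall>i \<in> act I t - {j}. 0 < p i" "p j \<in> {3/4, 1/4}" for p
    using sold_single_minded[OF fin j val, of p] that
    by (auto simp: payment_def adv_value_def split: if_splits)
  \<comment> \<open>If \<open>q j \<le> 3/8\<close>, both target prices sell (earning 1) and \<open>q\<close> earns at most 3/8;
    otherwise only the price 1/4 sells and \<open>q\<close> earns nothing.\<close>
  have "payment I t q \<le> (if q j \<le> adv_value (q j) then max (q j) 0 else 0)"
    using fin j val by (rule payment_single_minded_le)
  then show ?thesis
    using pay[of p_hi] pay[of p_lo] pos assms(5,6)
    by (auto simp: adv_value_def split: if_splits)
qed

lemma chasing_regret_hard_inst:
  assumes "2 \<le> T"
  shows "chasing_regret Q (hard_inst T v b) T signal_policy 2 T (hard_state 1 2) =
    (\<Sum>t = 2..T. payment (hard_inst T v True) t (signal_policy (hard_state (if b then 0 else 1) t))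
                - payment (hard_inst T v True) t (chase_price Q T v t))"
proof -
  have "payment (hard_inst T v b) t p = payment (hard_inst T v True) t p" if "2 \<le> t" for t p
    using sold_hard_inst_indep[of t T v b True] that by (simp add: payment_def)
  moreover have "hist (hard_inst T v b) 2 k = hist (hard_inst T v True) 2 k" for k
    by (rule hist_hard_inst_cong) simp
  ultimately show ?thesis
    by (simp add: chasing_regret_eq gstate_hard_inst chase_price_def sum_subtractf)
qed

lemma chasing_regret_sum_ge:
  fixes Q :: chaser
  assumes "2 \<le> T"
  defines "v \<equiv> adv_vals Q T T"
  shows "real (T - 1) / 4 \<le>
    chasing_regret Q (hard_inst T v True) T signal_policy 2 T (hard_state 1 2)
    + chasing_regret Q (hard_inst T v False) T signal_policy 2 T (hard_state 1 2)"
proof -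
  let ?I = "hard_inst T v True" and ?q = "chase_price Q T v"
  define gap where "gap t = payment ?I t (signal_policy (hard_state 0 t))
    + payment ?I t (signal_policy (hard_state 1 t)) - 2 * payment ?I t (?q t)" for t
  have "1/4 \<le> gap t" if t: "t \<in> {2..T}" for t
    unfolding gap_def
  proof (rule payment_gap_adv_value)
    show "val ?I t = single_minded t (adv_value (?q t t))"
      using t adv_vals_eq_adv_value[of t T Q T] by (simp add: v_def)
  qed (use t in \<open>auto simp: act_hard_inst signal_policy_def hard_state_def\<close>)
  then have "(\<Sum>t = 2..T. 1/4) \<le> sum gap {2..T}"
    by (rule sum_mono)
  also have "sum gap {2..T} =
      chasing_regret Q ?I T signal_policy 2 T (hard_state 1 2)
      + chasing_regret Q (hard_inst T v False) T signal_policy 2 T (hard_state 1 2)"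
    unfolding chasing_regret_hard_inst[OF assms(1)] sum.distrib[symmetric]
    by (rule sum.cong) (simp_all add: gap_def)
  finally show ?thesis
    using assms(1) by (simp add: of_nat_diff)
qed

lemma chasing_regret_lower_bound:
  assumes "2 \<le> T"
  shows "\<exists>I \<gamma> t0 tf s0. valid_inst 1 2 T I \<and> target_policy \<gamma> \<and> valid_state 1 I t0 s0
           \<and> 1 \<le> t0 \<and> t0 \<le> tf \<and> tf \<le> T \<and> real (T - 1) / 8 \<le> chasing_regret Q I T \<gamma> t0 tf s0"
proof -
  define v where "v = adv_vals Q T T"
  have "valid_inst 1 2 T (hard_inst T v b)" for b
    using assms adv_vals_range by (intro valid_hard_inst) (auto simp: v_def)
  moreover have "valid_state 1 (hard_inst T v b) 2 (hard_state 1 2)" for b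
    using assms by (auto simp: valid_state_def hard_state_def act_hard_inst split: if_splits)
  moreover obtain b where
    "real (T - 1) / 8 \<le> chasing_regret Q (hard_inst T v b) T signal_policy 2 T (hard_state 1 2)"
  proof -
    let ?R = "\<lambda>b. chasing_regret Q (hard_inst T v b) T signal_policy 2 T (hard_state 1 2)"
    have "real (T - 1) / 8 \<le> ?R True \<or> real (T - 1) / 8 \<le> ?R False"
      using chasing_regret_sum_ge[OF assms, of Q] unfolding v_def[symmetric] by linarith
    then show ?thesis
      using that by blast
  qed
  ultimately show ?thesis
    using assms target_policy_signal_policy
    by (intro exI[of _ "hard_inst T v b"] exI[of _ signal_policy] exI[of _ 2] exI[of _ T]
        exI[of _ "hard_state 1 2"]) simp
qed
theorem proposition2:
  shows "\<exists>(C::nat) (W::nat) (F :: nat \<Rightarrow> inst set).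
     (\<forall>T. \<forall>I\<in>F T. valid_inst C W T I) \<and>
     (\<forall>Q :: chaser. chaser_feasible C F Q \<longrightarrow>
        \<not> (\<forall>\<epsilon>>0. \<forall>\<^sub>F T in sequentially. \<forall>I\<in>F T. \<forall>\<gamma> t0 tf s0.
              target_policy \<gamma> \<and> valid_state C I t0 s0 \<and> 1 \<le> t0 \<and> t0 \<le> tf \<and> tf \<le> T
              \<longrightarrow> chasing_regret Q I T \<gamma> t0 tf s0 \<le> \<epsilon> * real T))"
proof (rule exI[of _ 1], rule exI[of _ 2], rule exI[of _ "\<lambda>T. {I. valid_inst 1 2 T I}"],
    intro conjI allI impI notI)
  fix Q :: chaser
  assume "\<forall>\<epsilon>>0. \<forall>\<^sub>F T in sequentially. \<forall>I\<in>{I. valid_inst 1 2 T I}. \<forall>\<gamma> t0 tf s0.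
    target_policy \<gamma> \<and> valid_state 1 I t0 s0 \<and> 1 \<le> t0 \<and> t0 \<le> tf \<and> tf \<le> T
    \<longrightarrow> chasing_regret Q I T \<gamma> t0 tf s0 \<le> \<epsilon> * real T"
  then obtain N where N: "\<forall>T\<ge>N. \<forall>I\<in>{I. valid_inst 1 2 T I}. \<forall>\<gamma> t0 tf s0.
    target_policy \<gamma> \<and> valid_state 1 I t0 s0 \<and> 1 \<le> t0 \<and> t0 \<le> tf \<and> tf \<le> T
    \<longrightarrow> chasing_regret Q I T \<gamma> t0 tf s0 \<le> 1/20 * real T"
    unfolding eventually_sequentially by (meson zero_less_divide_1_iff zero_less_numeral)
  define T where "T = max N 2"
  then have "2 \<le> T" "N \<le> T" by simp_all
  then obtain I \<gamma> t0 tf s0 where "valid_inst 1 2 T I" "target_policy \<gamma>" "valid_state 1 I t0 s0"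
    "1 \<le> t0" "t0 \<le> tf" "tf \<le> T" "real (T - 1) / 8 \<le> chasing_regret Q I T \<gamma> t0 tf s0"
    using chasing_regret_lower_bound by blast
  with N \<open>N \<le> T\<close> have "real (T - 1) / 8 \<le> 1/20 * real T"
    by fastforce
  then show False
    using \<open>2 \<le> T\<close> by (simp add: of_nat_diff)
qed simp

end
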